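(* Let $T$ be a finite rooted tree each of whose nodes $v$ carries a label $\ell(v)\in\mathbb{N}=\{1,2,\dots\}$. For $i\in\mathbb{N}$ let $p_i$ denote the $i$-th prime number. For each node $v$ let $n_v$ be the number of vertices in the subtree $T_v$ rooted at $v$, and define $C_v(x)\in\mathbb{Z}[x]$ inductively by $C_v(x)=x+p_{\ell(v)}$ if $v$ is a leaf, and $C_v(x)=x^{n_v}+p_{\ell(v)}\,x\prod_{u\text{ child of }v}C_u(x)+p_{\ell(v)}$ if $v$ is an internal node. Then for every vertex $v$ of $T$, $C_v(x)$ is irreducible over $\mathbb{Q}$.
   Context: $T_v$ consists of $v$ and all its descendants; $p_1=2,p_2=3,\dots$. *)

theory Defs
  imports "HOL-Computational_Algebra.Computational_Algebra" "HOL-Library.Infinite_Set"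
begin

datatype ltree = Node nat "ltree list"

fun label :: "ltree \<Rightarrow> nat" where
  "label (Node l cs) = l"

fun labels :: "ltree \<Rightarrow> nat set" where
  "labels (Node l cs) = insert l (\<Union> (set (map labels cs)))"

fun subtrees :: "ltree \<Rightarrow> ltree set" where
  "subtrees (Node l cs) = insert (Node l cs) (\<Union> (set (map subtrees cs)))"

fun nverts :: "ltree \<Rightarrow> nat" where
  "nverts (Node l cs) = 1 + sum_list (map nverts cs)"

text \<open>The i-th prime, 1-indexed: p_1 = 2, p_2 = 3, ...\<close>
definition nth_prime :: "nat \<Rightarrow> nat" where
  "nth_prime i = enumerate {p::nat. prime p} (i - 1)"

fun Cpoly :: "ltree \<Rightarrow> int poly" where
  "Cpoly (Node l cs) =
     (if cs = [] then [:int (nth_prime l), 1:]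
      else monom 1 (nverts (Node l cs))
           + smult (int (nth_prime l)) ([:0, 1:] * prod_list (map Cpoly cs))
           + [:int (nth_prime l):])"

end

theory Submission
  imports Defs "Berlekamp_Zassenhaus.Factor_Bound"
begin

text \<open>Every \<open>C\<^sub>v\<close> has the shape \<open>x\<^sup>d\<^sup>+\<^sup>1 + p x P(x) + p\<close> with \<open>p = p\<^sub>\<ell>\<^sub>(\<^sub>v\<^sub>)\<close> and
  \<open>d = deg P\<close> (for a leaf \<open>P = 0\<close>, otherwise \<open>P\<close> is the product over the children, of degree
  \<open>n\<^sub>v - 1\<close>). Such a polynomial is Eisenstein at \<open>p\<close>: its leading coefficient is
  \<open>1 + p lc(P) \<equiv> 1 (mod p)\<close>, all lower coefficients are multiples of \<open>p\<close>, and the constant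
  term is exactly \<open>p\<close>. Hence it is irreducible over \<open>\<int>\<close> in the degree sense, and by Gauss's
  lemma over \<open>\<rat>\<close>.\<close>

lemma exists_coeff_mult_not_dvd:
  fixes g h :: "'a :: idom poly"
  assumes q: "prime_elem q"
    and h0: "\<not> q dvd Polynomial.coeff h 0" and lc: "\<not> q dvd lead_coeff g"
  shows "\<exists>k \<le> degree g. \<not> q dvd Polynomial.coeff (g * h) k"
proof -
  txt \<open>For the least \<open>k\<close> with \<open>q \<not>| g\<^sub>k\<close>, the \<open>k\<close>-th coefficient of \<open>g h\<close>
    is \<open>g\<^sub>k h\<^sub>0\<close> modulo \<open>q\<close>.\<close>
  define k where "k = (LEAST k. \<not> q dvd Polynomial.coeff g k)"
  have ex: "\<not> q dvd Polynomial.coeff g (degree g)"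
    using lc by simp
  have gk: "\<not> q dvd Polynomial.coeff g k"
    unfolding k_def by (rule LeastI[of _ "degree g"]) (rule ex)
  have k_le: "k \<le> degree g"
    unfolding k_def by (rule Least_le) (rule ex)
  have below: "q dvd Polynomial.coeff g i" if "i < k" for i
    using not_less_Least[of i "\<lambda>k. \<not> q dvd Polynomial.coeff g k"] that unfolding k_def by blast
  have "Polynomial.coeff (g * h) k =
      (\<Sum>i<k. Polynomial.coeff g i * Polynomial.coeff h (k - i))
      + Polynomial.coeff g k * Polynomial.coeff h 0"
    by (simp add: coeff_mult lessThan_Suc_atMost[symmetric])
  moreover have "q dvd (\<Sum>i<k. Polynomial.coeff g i * Polynomial.coeff h (k - i))"
    by (intro dvd_sum) (simp add: below)
  moreover have "\<not> q dvd Polynomial.coeff g k * Polynomial.coeff h 0"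
    using q gk h0 by (simp add: prime_elem_dvd_mult_iff)
  ultimately show ?thesis
    using k_le by (metis dvd_add_right_iff)
qed

lemma eisenstein_irreducible\<^sub>d:
  fixes f :: "'a :: idom poly"
  assumes q: "prime_elem q" and deg: "degree f > 0" and lc: "\<not> q dvd lead_coeff f"
    and low: "\<And>i. i < degree f \<Longrightarrow> q dvd Polynomial.coeff f i"
    and c0: "\<not> q\<^sup>2 dvd Polynomial.coeff f 0"
  shows "irreducible\<^sub>d f"
proof (rule irreducible\<^sub>dI[OF deg])
  have no_factor: False
    if fgh: "f = g * h" and dg: "degree g < degree f" and g0: "q dvd Polynomial.coeff g 0" for g h
  proof -
    have "\<not> q dvd Polynomial.coeff h 0"
    proof
      assume "q dvd Polynomial.coeff h 0"
      with g0 have "q * q dvd Polynomial.coeff g 0 * Polynomial.coeff h 0" by (rule mult_dvd_mono)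
      with c0 fgh show False by (simp add: power2_eq_square coeff_mult)
    qed
    moreover have "\<not> q dvd lead_coeff g"
      using lc fgh by (metis dvd_mult2 lead_coeff_mult)
    ultimately obtain k where "k \<le> degree g" "\<not> q dvd Polynomial.coeff f k"
      using exists_coeff_mult_not_dvd[OF q] fgh by blast
    with dg low show False by simp
  qed
  fix g h assume "degree g < degree f" "degree h < degree f" and fgh: "f = g * h"
  have "q dvd Polynomial.coeff g 0 * Polynomial.coeff h 0"
    using low[of 0] deg fgh by (simp add: coeff_mult)
  then consider "q dvd Polynomial.coeff g 0" | "q dvd Polynomial.coeff h 0"
    using q by (auto simp: prime_elem_dvd_mult_iff)
  then show False
  proof cases
    case 1
    then show False using no_factor fgh \<open>degree g < degree f\<close> by blast
  next
    case 2
    then show False using no_factor fgh \<open>degree h < degree f\<close> by (metis mult.commute)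
  qed
qed

definition node_poly :: "'a :: comm_ring_1 \<Rightarrow> 'a poly \<Rightarrow> 'a poly" where
  "node_poly p P = Polynomial.monom 1 (Suc (degree P)) + Polynomial.smult p ([:0, 1:] * P) + [:p:]"

lemma coeff_node_poly:
  "Polynomial.coeff (node_poly p P) i =
     (if i = Suc (degree P) then 1 else 0) + (if i = 0 then p else p * Polynomial.coeff P (i - 1))"
  by (cases i) (simp_all add: node_poly_def coeff_monom)

lemma one_plus_prime_elem_times_neq_zero:
  fixes p :: "'a :: idom"
  assumes "prime_elem p"
  shows "1 + p * c \<noteq> 0"
proof
  assume "1 + p * c = 0"
  then have "p * - c = 1" by (metis add_eq_0_iff minus_minus mult_minus_right)
  then have "p dvd 1" by (metis dvdI)
  with assms show False by (simp add: prime_elem_not_unit)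
qed

lemma degree_node_poly:
  fixes p :: "'a :: idom"
  assumes "prime_elem p"
  shows "degree (node_poly p P) = Suc (degree P)"
proof (rule antisym)
  show "degree (node_poly p P) \<le> Suc (degree P)"
    by (rule degree_le) (auto simp: coeff_node_poly coeff_eq_0)
  show "Suc (degree P) \<le> degree (node_poly p P)"
    using one_plus_prime_elem_times_neq_zero[OF assms]
    by (intro le_degree) (simp add: coeff_node_poly)
qed

lemma irreducible\<^sub>d_node_poly:
  fixes p :: "'a :: idom"
  assumes p: "prime_elem p"
  shows "irreducible\<^sub>d (node_poly p P)"
proof (rule eisenstein_irreducible\<^sub>d[OF p])
  show "degree (node_poly p P) > 0"
    by (simp add: degree_node_poly[OF p])
  show "\<not> p dvd lead_coeff (node_poly p P)"
  proof
    assume "p dvd lead_coeff (node_poly p P)"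
    then have "p dvd 1 + p * lead_coeff P"
      by (simp add: degree_node_poly[OF p] coeff_node_poly)
    then have "p dvd 1" by (simp add: dvd_add_left_iff)
    with p show False by (simp add: prime_elem_not_unit)
  qed
  show "p dvd Polynomial.coeff (node_poly p P) i" if "i < degree (node_poly p P)" for i
    using that by (simp add: degree_node_poly[OF p] coeff_node_poly)
  show "\<not> p\<^sup>2 dvd Polynomial.coeff (node_poly p P) 0"
  proof
    assume "p\<^sup>2 dvd Polynomial.coeff (node_poly p P) 0"
    then have "p * p dvd p" by (simp add: coeff_node_poly power2_eq_square)
    then obtain k where "p = p * p * k" by (rule dvdE)
    with p have "p * k = 1" by (metis mult.assoc mult_cancel_left1 prime_elem_not_zeroI)
    then have "p dvd 1" by (metis dvd_triv_left)
    with p show False by (simp add: prime_elem_not_unit)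
  qed
qed

lemma prime_nth_prime: "prime (nth_prime i)"
  unfolding nth_prime_def using enumerate_in_set[OF primes_infinite] by simp

lemma nverts_pos: "nverts t > 0"
  by (cases t) simp

lemma degree_prod_list_Cpoly:
  assumes "\<forall>c \<in> set cs. degree (Cpoly c) = nverts c"
  shows "degree (prod_list (map Cpoly cs)) = sum_list (map nverts cs)"
proof -
  have "\<forall>c \<in> set cs. Cpoly c \<noteq> 0"
    using assms nverts_pos by (metis degree_0 less_numeral_extra(3))
  then have "degree (prod_list (map Cpoly cs)) = (\<Sum>c\<leftarrow>cs. degree (Cpoly c))"
    by (subst degree_prod_list_eq) (auto simp: o_def)
  also have "\<dots> = sum_list (map nverts cs)"
    using assms by (metis map_eq_conv)
  finally show ?thesis .
qed

lemma Cpoly_Node_eq_node_poly: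
  assumes "cs \<noteq> []" and "\<forall>c \<in> set cs. degree (Cpoly c) = nverts c"
  shows "Cpoly (Node l cs) = node_poly (int (nth_prime l)) (prod_list (map Cpoly cs))"
  using assms by (simp add: node_poly_def degree_prod_list_Cpoly)

lemma degree_Cpoly: "degree (Cpoly t) = nverts t"
proof (induction t rule: Cpoly.induct)
  case (1 l cs)
  show ?case
  proof (cases "cs = []")
    case False
    with 1 have "Cpoly (Node l cs) = node_poly (int (nth_prime l)) (prod_list (map Cpoly cs))"
      by (intro Cpoly_Node_eq_node_poly) auto
    then show ?thesis
      using prime_nth_prime[of l] 1 False
      by (simp add: degree_node_poly degree_prod_list_Cpoly)
  qed simp
qed

lemma Cpoly_eq_node_poly: "\<exists>P. Cpoly (Node l cs) = node_poly (int (nth_prime l)) P"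
proof (cases "cs = []")
  case True
  then have "Cpoly (Node l cs) = node_poly (int (nth_prime l)) 0"
    by (simp add: node_poly_def monom_Suc)
  then show ?thesis ..
next
  case False
  then have "Cpoly (Node l cs) = node_poly (int (nth_prime l)) (prod_list (map Cpoly cs))"
    by (intro Cpoly_Node_eq_node_poly) (simp_all add: degree_Cpoly)
  then show ?thesis ..
qed

lemma irreducible\<^sub>d_Cpoly: "irreducible\<^sub>d (Cpoly t)"
proof (cases t)
  case (Node l cs)
  then obtain P where "Cpoly t = node_poly (int (nth_prime l)) P"
    using Cpoly_eq_node_poly by blast
  with prime_nth_prime[of l] show ?thesis
    by (simp add: irreducible\<^sub>d_node_poly)
qed

theorem mainTheorem4:
  fixes T :: ltree
  assumes "\<forall>l \<in> labels T. l \<ge> 1"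
  shows "\<forall>v \<in> subtrees T. irreducible (map_poly (of_int :: int \<Rightarrow> rat) (Cpoly v))"
proof
  fix v
  have "irreducible\<^sub>d (map_poly rat_of_int (Cpoly v))"
    using irreducible\<^sub>d_Cpoly by (rule irreducible\<^sub>d_int_rat)
  then show "irreducible (map_poly (of_int :: int \<Rightarrow> rat) (Cpoly v))"
    by simp
qed

end
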